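(* For every $N\ge 1$ and every integer $r\ge 0$, $$\Pr[\mathcal{R}_2(N)=r]=\frac{1}{(N-1)!}\left[{N-1\atop r}\right],$$ where $\left[{m\atop r}\right]$ denotes the unsigned Stirling number of the first kind (the number of permutations of $\{1,\dots,m\}$ with exactly $r$ cycles, with $\left[{0\atop 0}\right]=1$).
   Context: A random recursive hypergraph (RRH) is the random hypergraph process defined as follows. At size $N=1$ it has vertex set $\{v_1\}$ and edge set $\{\{v_1\}\}$. Given the hypergraph of size $N$ (vertices $v_1,\dots,v_N$, exactly $N$ edges), one chooses an existing edge $e$ uniformly at random, independently of the past, and adds a new vertex $v_{N+1}$ together with the new edge $e\cup\{v_{N+1}\}$. The rank of a vertex $v$ is $\min\{|e| : v\in e\}$. $\mathcal{R}_k(N)$ denotes the number of vertices of rank $k$ in the RRH of size $N$ (equivalently, the number of edges of size $k$). *)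

theory Defs
  imports "HOL-Probability.Probability" "HOL-Combinatorics.Stirling"
begin

text \<open>Vertex v_i is represented by the natural number i;
  a hypergraph is represented by its list of edges (edge i is the edge created at step i).
  rrh N is the distribution of the RRH of size N (for N >= 1).\<close>

fun rrh :: "nat \<Rightarrow> nat set list pmf" where
  "rrh 0 = return_pmf []"
| "rrh (Suc 0) = return_pmf [{1}]"
| "rrh (Suc (Suc n)) =
     bind_pmf (rrh (Suc n)) (\<lambda>es.
       map_pmf (\<lambda>i. es @ [es ! i \<union> {Suc (Suc n)}]) (pmf_of_set {..<length es}))"

definition vrank :: "nat set list \<Rightarrow> nat \<Rightarrow> nat" where
  "vrank H v = Min {card e | e. e \<in> set H \<and> v \<in> e}"

definition rank_count :: "nat \<Rightarrow> nat set list \<Rightarrow> nat" where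
  "rank_count k H = card {v \<in> \<Union> (set H). vrank H v = k}"

end

theory Submission
  imports Defs
begin

text \<open>Vertex \<open>v\<^sub>j\<^sub>+\<^sub>1\<close> is born in edge \<open>j\<close>, which is contained in every other edge through
  \<open>v\<^sub>j\<^sub>+\<^sub>1\<close>; so its rank is the size of edge \<open>j\<close>, and \<open>\<R>\<^sub>2\<close> counts the edges of size 2. Such an edge
  arises exactly when the root edge \<open>{v\<^sub>1}\<close> is chosen, which at size \<open>k\<close> happens with probability
  \<open>1/k\<close> independently of the past. This is the Feller coupling for the number of cycles of a
  uniform random permutation of \<open>N - 1\<close> elements, whose law is given by the Stirling numbers.\<close>

definition rrh_wf :: "nat set list \<Rightarrow> bool" where
  "rrh_wf es \<longleftrightarrow>
     (\<forall>j<length es. {1, Suc j} \<subseteq> es!j \<and> es!j \<subseteq> {1..Suc j}) \<and>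
     (\<forall>j<length es. \<forall>k<length es. Suc j \<in> es!k \<longrightarrow> es!j \<subseteq> es!k)"

lemma rrh_wf_append:
  assumes wf: "rrh_wf es" and i: "i < length es"
  shows "rrh_wf (es @ [es!i \<union> {Suc (length es)}])"
proof -
  let ?m = "length es" and ?e = "es!i \<union> {Suc (length es)}"
  have bounds: "\<And>j. j < ?m \<Longrightarrow> {1, Suc j} \<subseteq> es!j \<and> es!j \<subseteq> {1..Suc j}"
    and closed: "\<And>j k. j < ?m \<Longrightarrow> k < ?m \<Longrightarrow> Suc j \<in> es!k \<Longrightarrow> es!j \<subseteq> es!k"
    using wf unfolding rrh_wf_def by blast+
  have fresh: "Suc ?m \<notin> es!j" if "j < ?m" for j
    using bounds[OF that] that by auto
  have new_bounds: "{1, Suc ?m} \<subseteq> ?e \<and> ?e \<subseteq> {1..Suc ?m}"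
    using bounds[OF i] i by auto
  have new_closed: "es!j \<subseteq> ?e" if "j < ?m" "Suc j \<in> ?e" for j
    using that closed[OF _ i] by auto
  have "{1, Suc j} \<subseteq> (es @ [?e])!j \<and> (es @ [?e])!j \<subseteq> {1..Suc j}" if "j < Suc ?m" for j
  proof -
    from that consider "j < ?m" | "j = ?m" by linarith
    then show ?thesis
      using bounds new_bounds by cases (simp_all add: nth_append)
  qed
  moreover have "(es @ [?e])!j \<subseteq> (es @ [?e])!k"
    if j: "j < Suc ?m" and k: "k < Suc ?m" and jk: "Suc j \<in> (es @ [?e])!k" for j k
  proof (cases "k < ?m")
    case True
    with jk fresh have "j < ?m" using j by (auto simp: nth_append less_Suc_eq)
    with True jk closed show ?thesis by (simp add: nth_append)
  next
    case False
    with k have "k = ?m" by simp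
    with j jk new_closed show ?thesis by (auto simp: nth_append less_Suc_eq)
  qed
  ultimately show ?thesis
    unfolding rrh_wf_def length_append_singleton by blast
qed

lemma rrh_wf_rrh:
  assumes "es \<in> set_pmf (rrh (Suc n))"
  shows "rrh_wf es \<and> length es = Suc n"
  using assms
proof (induction n arbitrary: es)
  case 0
  then show ?case by (simp add: rrh_wf_def)
next
  case (Suc n)
  then obtain es0 i where es0: "es0 \<in> set_pmf (rrh (Suc n))"
    and i: "i \<in> set_pmf (pmf_of_set {..<length es0})"
    and es: "es = es0 @ [es0!i \<union> {Suc (Suc n)}]"
    by auto
  from Suc.IH[OF es0] have wf0: "rrh_wf es0" and len0: "length es0 = Suc n" by auto
  with i have "i < length es0" by (subst (asm) set_pmf_of_set) auto
  with es wf0 len0 rrh_wf_append[of es0 i] show ?case by simp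
qed

lemma Union_set_rrh_wf:
  assumes "rrh_wf es"
  shows "\<Union> (set es) = Suc ` {..<length es}"
proof
  show "\<Union> (set es) \<subseteq> Suc ` {..<length es}"
  proof
    fix v assume "v \<in> \<Union> (set es)"
    then obtain k where "k < length es" "v \<in> es!k" by (auto simp: in_set_conv_nth)
    moreover from assms \<open>k < length es\<close> have "es!k \<subseteq> {1..Suc k}"
      unfolding rrh_wf_def by blast
    ultimately have "v \<in> {1..Suc k}" by blast
    with \<open>k < length es\<close> show "v \<in> Suc ` {..<length es}"
      by (auto intro!: image_eqI[of _ _ "v - 1"])
  qed
  have "Suc j \<in> es!j" if "j < length es" for j
    using assms that unfolding rrh_wf_def by blast
  then show "Suc ` {..<length es} \<subseteq> \<Union> (set es)"
    by (auto intro: nth_mem)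
qed

lemma vrank_rrh_wf:
  assumes wf: "rrh_wf es" and j: "j < length es"
  shows "vrank es (Suc j) = card (es!j)"
proof -
  let ?S = "{card e |e. e \<in> set es \<and> Suc j \<in> e}"
  have finite_edges: "finite (es!k)" if "k < length es" for k
    using wf that unfolding rrh_wf_def by (meson finite_atLeastAtMost finite_subset)
  have "finite ?S"
    by (rule finite_subset[of _ "card ` set es"]) auto
  moreover have "card (es!j) \<in> ?S"
    using wf j unfolding rrh_wf_def by (auto intro: nth_mem)
  moreover have "card (es!j) \<le> x" if "x \<in> ?S" for x
  proof -
    from that obtain k where "k < length es" "x = card (es!k)" "Suc j \<in> es!k"
      by (auto simp: in_set_conv_nth)
    with wf j finite_edges show ?thesis unfolding rrh_wf_def by (simp add: card_mono)
  qed
  ultimately show ?thesis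
    unfolding vrank_def by (intro Min_eqI) auto
qed

lemma rank_count_rrh_wf:
  assumes "rrh_wf es"
  shows "rank_count k es = card {j. j < length es \<and> card (es!j) = k}"
proof -
  have "{v \<in> \<Union> (set es). vrank es v = k} = Suc ` {j \<in> {..<length es}. vrank es (Suc j) = k}"
    unfolding Union_set_rrh_wf[OF assms] by (rule Compr_image_eq)
  also have "{j \<in> {..<length es}. vrank es (Suc j) = k} = {j. j < length es \<and> card (es!j) = k}"
    using vrank_rrh_wf[OF assms] by auto
  finally show ?thesis
    unfolding rank_count_def by (simp add: card_image)
qed

text \<open>Only the root edge \<open>{1}\<close> has size 1, so a new edge of size 2 arises exactly when the root is chosen.\<close>
lemma rank_count_two_append:
  assumes wf: "rrh_wf es" and i: "i < length es"
  shows "rank_count 2 (es @ [es!i \<union> {Suc (length es)}]) = rank_count 2 es + of_bool (i = 0)"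
proof -
  let ?m = "length es" and ?e = "es!i \<union> {Suc (length es)}"
  have bounds: "{1, Suc i} \<subseteq> es!i" "es!i \<subseteq> {1..Suc i}"
    using wf i unfolding rrh_wf_def by auto
  then have "finite (es!i)" by (meson finite_atLeastAtMost finite_subset)
  moreover have "Suc ?m \<notin> es!i" using bounds i by auto
  ultimately have card_e: "card ?e = Suc (card (es!i))" by simp
  have "card (es!i) = 1 \<longleftrightarrow> i = 0"
  proof
    assume "card (es!i) = 1"
    show "i = 0"
    proof (rule ccontr)
      assume "i \<noteq> 0"
      have "card {1, Suc i} \<le> card (es!i)"
        using \<open>finite (es!i)\<close> bounds(1) by (rule card_mono)
      with \<open>i \<noteq> 0\<close> \<open>card (es!i) = 1\<close> show False by simp
    qed
  next
    assume "i = 0"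
    with bounds have "es!i = {1}" by auto
    then show "card (es!i) = 1" by simp
  qed
  with card_e have new_edge: "card ?e = 2 \<longleftrightarrow> i = 0" by simp
  have "{j. j < Suc ?m \<and> card ((es @ [?e])!j) = 2} =
      {j. j < ?m \<and> card (es!j) = 2} \<union> {j. j = ?m \<and> i = 0}"
    using new_edge by (auto simp: nth_append less_Suc_eq)
  then have "card {j. j < Suc ?m \<and> card ((es @ [?e])!j) = 2} =
      card {j. j < ?m \<and> card (es!j) = 2} + of_bool (i = 0)"
    by (simp add: card_Un_disjoint)
  then show ?thesis
    unfolding rank_count_rrh_wf[OF wf] rank_count_rrh_wf[OF rrh_wf_append[OF wf i]] by simp
qed

text \<open>Law of the number of cycles of a uniform random permutation of \<open>n\<close> elements
  (Feller coupling): element \<open>k + 1\<close> opens a new cycle with probability \<open>1 / (k + 1)\<close>.\<close>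
fun cycle_count_pmf :: "nat \<Rightarrow> nat pmf" where
  "cycle_count_pmf 0 = return_pmf 0"
| "cycle_count_pmf (Suc n) =
     bind_pmf (pmf_of_set {..<Suc n}) (\<lambda>i. map_pmf (\<lambda>c. c + of_bool (i = 0)) (cycle_count_pmf n))"

lemma pmf_cycle_count_pmf: "pmf (cycle_count_pmf n) r = real (stirling n r) / fact n"
proof (induction n arbitrary: r)
  case 0
  then show ?case by (cases r) (auto simp: indicator_def)
next
  case (Suc n)
  have "pmf (cycle_count_pmf (Suc n)) r =
      (\<Sum>i<Suc n. pmf (map_pmf (\<lambda>c. c + of_bool (i = 0)) (cycle_count_pmf n)) r) / Suc n"
    by (simp only: cycle_count_pmf.simps, subst pmf_bind_pmf_of_set) auto
  also have "\<dots> = (pmf (map_pmf Suc (cycle_count_pmf n)) r + n * pmf (cycle_count_pmf n) r) / Suc n"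
    by (subst sum.lessThan_Suc_shift) (simp del: sum.lessThan_Suc)
  also have "\<dots> = real (stirling (Suc n) r) / fact (Suc n)"
  proof (cases r)
    case 0
    have "pmf (map_pmf Suc (cycle_count_pmf n)) 0 = 0" by (simp add: pmf_eq_0_set_pmf)
    moreover have "real n * real (stirling n 0) = 0" by (cases n) auto
    ultimately show ?thesis using 0 Suc.IH by simp
  next
    case (Suc k)
    have "pmf (map_pmf Suc (cycle_count_pmf n)) (Suc k) = pmf (cycle_count_pmf n) k"
      by (simp add: pmf_map_inj')
    moreover have "(fact (Suc n) :: real) = Suc n * fact n" by (simp add: algebra_simps)
    ultimately show ?thesis
      unfolding Suc Suc.IH by (simp add: field_simps)
  qed
  finally show ?case .
qed

lemma map_pmf_rank_count_two_rrh: "map_pmf (rank_count 2) (rrh (Suc n)) = cycle_count_pmf n"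
proof (induction n)
  case 0
  then show ?case by (simp add: rank_count_def vrank_def)
next
  case (Suc n)
  have "map_pmf (rank_count 2) (rrh (Suc (Suc n))) =
      bind_pmf (rrh (Suc n)) (\<lambda>es. map_pmf (\<lambda>i. rank_count 2 es + of_bool (i = 0)) (pmf_of_set {..<Suc n}))"
    unfolding rrh.simps map_bind_pmf map_pmf_comp
  proof (intro bind_pmf_cong refl)
    fix es assume "es \<in> set_pmf (rrh (Suc n))"
    then have wf: "rrh_wf es" and len: "length es = Suc n" by (simp_all add: rrh_wf_rrh)
    have "rank_count 2 (es @ [es!i \<union> {Suc (Suc n)}]) = rank_count 2 es + of_bool (i = 0)"
      if "i \<in> set_pmf (pmf_of_set {..<Suc n})" for i
    proof -
      from that len have "i < length es" by (subst (asm) set_pmf_of_set) auto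
      with rank_count_two_append[OF wf] len show ?thesis by simp
    qed
    then show "map_pmf (\<lambda>i. rank_count 2 (es @ [es!i \<union> {Suc (Suc n)}])) (pmf_of_set {..<length es}) =
        map_pmf (\<lambda>i. rank_count 2 es + of_bool (i = 0)) (pmf_of_set {..<Suc n})"
      unfolding len by (rule map_pmf_cong[OF refl])
  qed
  also have "\<dots> = bind_pmf (cycle_count_pmf n) (\<lambda>c. map_pmf (\<lambda>i. c + of_bool (i = 0)) (pmf_of_set {..<Suc n}))"
    unfolding Suc.IH[symmetric] bind_map_pmf ..
  also have "\<dots> = cycle_count_pmf (Suc n)"
    unfolding map_pmf_def cycle_count_pmf.simps by (rule bind_commute_pmf)
  finally show ?case .
qed

theorem mainTheorem7:
  fixes N r :: nat
  assumes "N \<ge> 1"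
  shows "measure_pmf.prob (rrh N) {H. rank_count 2 H = r}
           = real (stirling (N - 1) r) / fact (N - 1)"
proof -
  obtain n where N: "N = Suc n" using assms by (cases N) auto
  have "measure_pmf.prob (rrh N) {H. rank_count 2 H = r} = pmf (map_pmf (rank_count 2) (rrh N)) r"
    by (simp add: pmf_map vimage_def)
  also have "\<dots> = pmf (cycle_count_pmf n) r"
    by (simp add: N map_pmf_rank_count_two_rrh)
  finally show ?thesis
    by (simp add: N pmf_cycle_count_pmf)
qed

end
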